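(* Let $R$ be a commutative ring and $E$ a set of $w\ge3$ distinct non-trivial idempotents of $R$ such that $eR$ is a maximal ideal of $R$ for every $e\in E$. Let $x=f_1f_2\cdots f_k$ and $y=b_1b_2\cdots b_j$ with $f_1,\dots,f_k,b_1,\dots,b_j\in E$ and $2\le k,j<w$. Then (1) $x\ne0$; (2) $x=y$ if and only if $\{f_1,\dots,f_k\}=\{b_1,\dots,b_j\}$.
   Context: Rings have $1\ne0$. An idempotent $e$ ($e^2=e$) is non-trivial if $e\ne0,1$. *)

theory Defs
  imports "HOL-Algebra.Ideal"
begin

end

(* For distinct e, f in E the principal ideals eR and fR are distinct maximal ideals,
   since an idempotent generator of a principal ideal is unique; hence eR + fR = R and
   (1 - e)(1 - f) = 0.  Consequently a product x of elements of E satisfies x(1 - e) = 0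
   if e is a factor of x and x(1 - e) = 1 - e otherwise, where 1 - e is nonzero.  Fewer
   than |E| factors miss some e, so x is nonzero, and x determines its set of factors.
   Conversely, a product of commuting idempotents depends only on the set of factors. *)

theory Submission
  imports Defs
begin

lemma (in ring) maximalideals_add_eq_carrier:
  assumes "maximalideal I R" and "maximalideal J R" and "I \<noteq> J"
  shows "I <+> J = carrier R"
proof -
  interpret I: maximalideal I R by fact
  interpret J: maximalideal J R by fact
  have sum_ideal: "ideal (I <+> J) R"
    by (rule add_ideals[OF I.is_ideal J.is_ideal])
  have "I \<union> J \<subseteq> I <+> J"
    using genideal_self[of "I \<union> J"] union_genideal[OF I.is_ideal J.is_ideal] I.a_subset J.a_subset
    by auto
  moreover have "I <+> J \<subseteq> carrier R"
    using ideal.Icarr[OF sum_ideal] by blast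
  ultimately have "I <+> J = I \<or> I <+> J = carrier R"
    using I.I_maximal[OF sum_ideal] by blast
  moreover have "I <+> J \<noteq> I"
    using J.I_maximal[OF I.is_ideal] I.I_notcarr I.a_subset \<open>I \<union> J \<subseteq> I <+> J\<close> \<open>I \<noteq> J\<close>
    by auto
  ultimately show ?thesis by blast
qed

lemma (in cring) cgenideal_idempotent_mult:
  assumes "e \<in> carrier R" "e \<otimes> e = e" "x \<in> PIdl e"
  shows "x \<otimes> e = x"
  using assms by (auto simp: cgenideal_def m_assoc)

lemma (in cring) cgenideal_idempotent_inj:
  assumes "e \<in> carrier R" "e \<otimes> e = e" "f \<in> carrier R" "f \<otimes> f = f" "PIdl e = PIdl f"
  shows "e = f"
proof -
  have "e \<otimes> f = e" "f \<otimes> e = f"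
    using assms cgenideal_self cgenideal_idempotent_mult by metis+
  then show ?thesis using assms m_comm by metis
qed

lemma (in cring) idempotent_complement_mult_self:
  assumes "e \<in> carrier R" "e \<otimes> e = e"
  shows "(\<one> \<ominus> e) \<otimes> e = \<zero>"
proof -
  have "(\<one> \<ominus> e) \<otimes> e = e \<ominus> e \<otimes> e"
    using assms(1) by algebra
  then show ?thesis using assms by (simp add: minus_eq r_neg)
qed

lemma (in cring) idempotent_complement_annihilates_cgenideal:
  assumes "e \<in> carrier R" "e \<otimes> e = e" "x \<in> PIdl e"
  shows "(\<one> \<ominus> e) \<otimes> x = \<zero>"
proof -
  have "x \<in> carrier R" using ideal.Icarr[OF cgenideal_ideal] assms by blast
  have "(\<one> \<ominus> e) \<otimes> x = (\<one> \<ominus> e) \<otimes> (x \<otimes> e)"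
    using cgenideal_idempotent_mult[OF assms] by simp
  also have "\<dots> = x \<otimes> ((\<one> \<ominus> e) \<otimes> e)"
    using \<open>x \<in> carrier R\<close> assms(1) by algebra
  also have "\<dots> = \<zero>"
    using idempotent_complement_mult_self[OF assms(1,2)] \<open>x \<in> carrier R\<close> by simp
  finally show ?thesis .
qed

lemma (in cring) comaximal_idempotents_complements_mult_eq_zero:
  assumes e: "e \<in> carrier R" "e \<otimes> e = e" and f: "f \<in> carrier R" "f \<otimes> f = f"
    and comaximal: "PIdl e <+> PIdl f = carrier R"
  shows "(\<one> \<ominus> e) \<otimes> (\<one> \<ominus> f) = \<zero>"
proof -
  obtain a b where a: "a \<in> PIdl e" and b: "b \<in> PIdl f" and one: "\<one> = a \<oplus> b"
    using comaximal one_closed unfolding set_add_def' by blast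
  have carr: "a \<in> carrier R" "b \<in> carrier R" "\<one> \<ominus> e \<in> carrier R" "\<one> \<ominus> f \<in> carrier R"
    using a b e f ideal.Icarr[OF cgenideal_ideal] by blast+
  have "(\<one> \<ominus> e) \<otimes> (\<one> \<ominus> f) = (\<one> \<ominus> e) \<otimes> (\<one> \<ominus> f) \<otimes> (a \<oplus> b)"
    using carr by (simp flip: one)
  also have "\<dots> = (\<one> \<ominus> f) \<otimes> ((\<one> \<ominus> e) \<otimes> a) \<oplus> (\<one> \<ominus> e) \<otimes> ((\<one> \<ominus> f) \<otimes> b)"
    using carr by (simp add: l_distr r_distr m_ac)
  also have "\<dots> = \<zero>"
    using idempotent_complement_annihilates_cgenideal e f a b carr by simp
  finally show ?thesis .
qed

lemma (in cring) maximal_idempotents_complements_mult_eq_zero: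
  assumes "e \<in> carrier R" "e \<otimes> e = e" "f \<in> carrier R" "f \<otimes> f = f" "e \<noteq> f"
    and "maximalideal (PIdl e) R" "maximalideal (PIdl f) R"
  shows "(\<one> \<ominus> e) \<otimes> (\<one> \<ominus> f) = \<zero>"
  using assms comaximal_idempotents_complements_mult_eq_zero maximalideals_add_eq_carrier
    cgenideal_idempotent_inj by metis

lemma (in cring) finprod_id_closed:
  "S \<subseteq> carrier R \<Longrightarrow> (\<Otimes>x\<in>S. x) \<in> carrier R"
  by (auto intro: finprod_closed)

lemma (in cring) finprod_id_insert:
  "\<lbrakk>finite S; a \<notin> S; insert a S \<subseteq> carrier R\<rbrakk> \<Longrightarrow> (\<Otimes>x\<in>insert a S. x) = a \<otimes> (\<Otimes>x\<in>S. x)"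
  by (intro finprod_insert) auto

lemma (in cring) idempotent_mult_finprod_absorb:
  assumes "finite S" "S \<subseteq> carrier R" "a \<in> S" "a \<otimes> a = a"
  shows "a \<otimes> (\<Otimes>x\<in>S. x) = (\<Otimes>x\<in>S. x)"
proof -
  have S: "S = insert a (S - {a})" using assms by blast
  have "a \<in> carrier R" "(\<Otimes>x\<in>S - {a}. x) \<in> carrier R"
    using assms finprod_id_closed[of "S - {a}"] by auto
  then show ?thesis
    using assms finprod_id_insert[of "S - {a}" a] by (subst (1 2) S) (simp add: m_assoc[symmetric])
qed

lemma (in cring) foldr_mult_idempotents_eq_finprod:
  assumes "set l \<subseteq> carrier R" "\<And>a. a \<in> set l \<Longrightarrow> a \<otimes> a = a"
  shows "foldr (\<lambda>a b. a \<otimes> b) l \<one> = (\<Otimes>x\<in>set l. x)"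
  using assms
proof (induction l)
  case Nil
  then show ?case by simp
next
  case (Cons a l)
  then show ?case
    using idempotent_mult_finprod_absorb[of "set l" a] finprod_id_insert[of "set l" a]
    by (cases "a \<in> set l") (auto simp: insert_absorb)
qed

lemma (in cring) finprod_mult_idempotent_complement:
  assumes "finite S" "S \<subseteq> carrier R" "e \<in> carrier R" "e \<otimes> e = e"
    and "\<And>a. a \<in> S \<Longrightarrow> a \<noteq> e \<Longrightarrow> (\<one> \<ominus> a) \<otimes> (\<one> \<ominus> e) = \<zero>"
  shows "(\<Otimes>x\<in>S. x) \<otimes> (\<one> \<ominus> e) = (if e \<in> S then \<zero> else \<one> \<ominus> e)"
  using assms
proof (induction S rule: finite_induct)
  case empty
  then show ?case by simp
next
  case (insert a S)
  then have "a \<in> carrier R" "(\<Otimes>x\<in>S. x) \<in> carrier R"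
    using finprod_id_closed by auto
  then have "(\<Otimes>x\<in>insert a S. x) \<otimes> (\<one> \<ominus> e) = a \<otimes> ((\<Otimes>x\<in>S. x) \<otimes> (\<one> \<ominus> e))"
    using insert finprod_id_insert[of S a] by (simp add: m_assoc)
  also have "\<dots> = (if e \<in> insert a S then \<zero> else \<one> \<ominus> e)"
  proof (cases "e \<in> S")
    case True
    then show ?thesis using insert \<open>a \<in> carrier R\<close> by simp
  next
    case False
    have "a \<otimes> (\<one> \<ominus> e) = (\<one> \<ominus> e) \<ominus> (\<one> \<ominus> a) \<otimes> (\<one> \<ominus> e)"
      using \<open>a \<in> carrier R\<close> \<open>e \<in> carrier R\<close> by algebra
    moreover have "e \<otimes> (\<one> \<ominus> e) = \<zero>"
      using idempotent_complement_mult_self \<open>e \<in> carrier R\<close> \<open>e \<otimes> e = e\<close> m_comm by simp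
    ultimately show ?thesis
      using insert False \<open>e \<in> carrier R\<close> by (auto simp: minus_eq)
  qed
  finally show ?case .
qed

theorem lemma3p20:
  fixes R (structure) and E :: "'a set" and w :: nat
    and fs bs :: "'a list"
  assumes "cring R"
    and "\<one>\<^bsub>R\<^esub> \<noteq> \<zero>\<^bsub>R\<^esub>"
    and "E \<subseteq> carrier R" and "finite E" and "card E = w" and "w \<ge> 3"
    and "\<And>e. e \<in> E \<Longrightarrow> e \<otimes>\<^bsub>R\<^esub> e = e \<and> e \<noteq> \<zero>\<^bsub>R\<^esub> \<and> e \<noteq> \<one>\<^bsub>R\<^esub>"
    and "\<And>e. e \<in> E \<Longrightarrow> maximalideal (PIdl\<^bsub>R\<^esub> e) R"
    and "set fs \<subseteq> E" and "2 \<le> length fs" and "length fs < w"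
    and "set bs \<subseteq> E" and "2 \<le> length bs" and "length bs < w"
  shows "foldr (\<lambda>a b. a \<otimes>\<^bsub>R\<^esub> b) fs \<one>\<^bsub>R\<^esub> \<noteq> \<zero>\<^bsub>R\<^esub>
    \<and> (foldr (\<lambda>a b. a \<otimes>\<^bsub>R\<^esub> b) fs \<one>\<^bsub>R\<^esub> = foldr (\<lambda>a b. a \<otimes>\<^bsub>R\<^esub> b) bs \<one>\<^bsub>R\<^esub>
         \<longleftrightarrow> set fs = set bs)"
proof -
  interpret cring R by fact
  let ?prod = "\<lambda>l. foldr (\<lambda>a b. a \<otimes> b) l \<one>"
  have E: "E \<subseteq> carrier R" and idem: "\<And>e. e \<in> E \<Longrightarrow> e \<otimes> e = e"
    using assms(3,7) by auto
  have prod_eq: "?prod l = (\<Otimes>x\<in>set l. x)" if "set l \<subseteq> E" for l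
    using foldr_mult_idempotents_eq_finprod that E idem by blast
  have prod_complement: "?prod l \<otimes> (\<one> \<ominus> e) = (if e \<in> set l then \<zero> else \<one> \<ominus> e)"
    if "set l \<subseteq> E" "e \<in> E" for l e
    unfolding prod_eq[OF that(1)] using that E idem assms(8)
    by (intro finprod_mult_idempotent_complement maximal_idempotents_complements_mult_eq_zero) auto
  have complement_nonzero: "\<one> \<ominus> e \<noteq> \<zero>" if "e \<in> E" for e
    using that E assms(7) by (metis a_minus_def add.inv_closed minus_equality one_closed r_neg subsetD)
  have "card (set fs) < card E"
    using card_length[of fs] assms(5,11) by linarith
  then have "\<not> E \<subseteq> set fs"
    using card_mono[OF List.finite_set, of E fs] by linarith
  then obtain e where "e \<in> E" "e \<notin> set fs" by blast
  then have "?prod fs \<noteq> \<zero>"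
    using prod_complement[OF assms(9)] complement_nonzero E by force
  moreover have "?prod fs = ?prod bs \<longleftrightarrow> set fs = set bs"
  proof
    assume "?prod fs = ?prod bs"
    then have "e \<in> set fs \<longleftrightarrow> e \<in> set bs" if "e \<in> E" for e
      using prod_complement[OF assms(9) that] prod_complement[OF assms(12) that]
        complement_nonzero[OF that] by metis
    then show "set fs = set bs" using assms(9,12) by blast
  qed (simp add: prod_eq assms(9,12))
  ultimately show ?thesis by blast
qed

end
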